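(* Let $(P_n)_{n\ge0}$ be a sequence with $P_n\in\Lambda_n$ satisfying: $P_0$ is a unit of $\Lambda_0=\mathbf{Z}_p$; $\pi_{1/0}(P_1)=uP_0$ for some $u\in\mathbf{Z}_p^\times$; and $\pi_{n+1/n}(P_{n+1})=a\,P_n-\nu_{n-1/n}(P_{n-1})$ for all $n\ge1$, where $a\in p\mathbf{Z}_p$ is fixed. Then for all $n\ge0$, $P_n\neq 0$, $\mu(P_n)=0$ and $\lambda(P_n)=q_n$, where $q_0=q_1=0$ and for $n\ge2$ $$q_n=\begin{cases}p^{n-1}-p^{n-2}+\cdots+p-1 & n \text{ even},\\ p^{n-1}-p^{n-2}+\cdots+p^2-p & n \text{ odd}.\end{cases}$$
   Context: Let $p$ be an odd prime. For $n\ge0$ let $G_n$ be a cyclic group of order $p^n$ with surjections $G_n\to G_{n-1}$, $\Lambda_n=\mathbf{Z}_p[G_n]$, $\widetilde\Lambda_n=\mathbf{F}_p[G_n]$ and $\widetilde I_n$ the augmentation ideal of $\widetilde\Lambda_n$. For nonzero $f\in\Lambda_n$, $\mu(f)$ is the unique integer with $f\in p^{\mu(f)}\Lambda_n\setminus p^{\mu(f)+1}\Lambda_n$, and $\lambda(f)$ is the unique integer such that the reduction mod $p$ of $p^{-\mu(f)}f$ lies in $\widetilde I_n^{\lambda(f)}\setminus\widetilde I_n^{\lambda(f)+1}$. $\pi_{n/n-1}:\Lambda_n\to\Lambda_{n-1}$ is induced by $G_n\to G_{n-1}$, and $\nu_{n-1/n}:\Lambda_{n-1}\to\Lambda_n$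 is the $\mathbf{Z}_p$-linear map with $\nu_{n-1/n}(\sigma)=\sum_{\tau\in G_n,\ \tau\mapsto\sigma}\tau$ for $\sigma\in G_{n-1}$. (In the paper, $P_n=F_n(c_n)$ is the image of Kobayashi's point $c_n$ and $a=a_p$; only the stated properties are used.) *)

theory Defs
  imports "HOL-Computational_Algebra.Primes"
begin

text \<open>An element of Z_p is represented by x :: nat => int with x k in {0..<p^k}
  (its residue mod p^k) and x (Suc k) mod p^k = x k.\<close>

definition zp :: "nat \<Rightarrow> (nat \<Rightarrow> int) \<Rightarrow> bool" where
  "zp p x \<longleftrightarrow> (\<forall>k. 0 \<le> x k \<and> x k < int p ^ k \<and> x (Suc k) mod (int p ^ k) = x k)"

definition zp_of_int :: "nat \<Rightarrow> int \<Rightarrow> nat \<Rightarrow> int" where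
  "zp_of_int p z = (\<lambda>k. z mod (int p ^ k))"

definition zp_add :: "nat \<Rightarrow> (nat \<Rightarrow> int) \<Rightarrow> (nat \<Rightarrow> int) \<Rightarrow> nat \<Rightarrow> int" where
  "zp_add p x y = (\<lambda>k. (x k + y k) mod (int p ^ k))"

definition zp_neg :: "nat \<Rightarrow> (nat \<Rightarrow> int) \<Rightarrow> nat \<Rightarrow> int" where
  "zp_neg p x = (\<lambda>k. (- x k) mod (int p ^ k))"

definition zp_mul :: "nat \<Rightarrow> (nat \<Rightarrow> int) \<Rightarrow> (nat \<Rightarrow> int) \<Rightarrow> nat \<Rightarrow> int" where
  "zp_mul p x y = (\<lambda>k. (x k * y k) mod (int p ^ k))"

definition zp_sum :: "nat \<Rightarrow> ('a \<Rightarrow> nat \<Rightarrow> int) \<Rightarrow> 'a set \<Rightarrow> nat \<Rightarrow> int" where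
  "zp_sum p f A = (\<lambda>k. (\<Sum>a\<in>A. f a k) mod (int p ^ k))"

definition zp_unit :: "nat \<Rightarrow> (nat \<Rightarrow> int) \<Rightarrow> bool" where
  "zp_unit p x \<longleftrightarrow> zp p x \<and> (\<exists>y. zp p y \<and> zp_mul p x y = zp_of_int p 1)"

definition zp_in_pZp :: "nat \<Rightarrow> (nat \<Rightarrow> int) \<Rightarrow> bool" where
  "zp_in_pZp p x \<longleftrightarrow> zp p x \<and> (\<exists>b. zp p b \<and> x = zp_mul p (zp_of_int p (int p)) b)"

text \<open>G_n is realised as Z/p^n Z with elements 0..<p^n (group law: addition mod p^n);
  the surjection G_n -> G_(n-1) is g |-> g mod p^(n-1).  An element of Lambda_n is a
  function F with F g the Z_p-coefficient of g (g < p^n), and F g = 0 for g >= p^n.\<close>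

definition Lam :: "nat \<Rightarrow> nat \<Rightarrow> (nat \<Rightarrow> nat \<Rightarrow> int) \<Rightarrow> bool" where
  "Lam p n F \<longleftrightarrow> (\<forall>g. (g < p ^ n \<longrightarrow> zp p (F g)) \<and> (p ^ n \<le> g \<longrightarrow> F g = zp_of_int p 0))"

definition lam_add :: "nat \<Rightarrow> (nat \<Rightarrow> nat \<Rightarrow> int) \<Rightarrow> (nat \<Rightarrow> nat \<Rightarrow> int) \<Rightarrow> nat \<Rightarrow> nat \<Rightarrow> int" where
  "lam_add p F H = (\<lambda>g. zp_add p (F g) (H g))"

definition lam_neg :: "nat \<Rightarrow> (nat \<Rightarrow> nat \<Rightarrow> int) \<Rightarrow> nat \<Rightarrow> nat \<Rightarrow> int" where
  "lam_neg p F = (\<lambda>g. zp_neg p (F g))"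

definition lam_smult :: "nat \<Rightarrow> (nat \<Rightarrow> int) \<Rightarrow> (nat \<Rightarrow> nat \<Rightarrow> int) \<Rightarrow> nat \<Rightarrow> nat \<Rightarrow> int" where
  "lam_smult p c F = (\<lambda>g. zp_mul p c (F g))"

definition lam_pi :: "nat \<Rightarrow> nat \<Rightarrow> (nat \<Rightarrow> nat \<Rightarrow> int) \<Rightarrow> nat \<Rightarrow> nat \<Rightarrow> int" where
  "lam_pi p n F = (\<lambda>h. if h < p ^ (n - 1)
      then zp_sum p F {g. g < p ^ n \<and> g mod p ^ (n - 1) = h}
      else zp_of_int p 0)"

text \<open>nu_{n-1/n} : Lambda_(n-1) -> Lambda_n, sigma |-> sum of its preimages\<close>
definition lam_nu :: "nat \<Rightarrow> nat \<Rightarrow> (nat \<Rightarrow> nat \<Rightarrow> int) \<Rightarrow> nat \<Rightarrow> nat \<Rightarrow> int" where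
  "lam_nu p n Q = (\<lambda>g. if g < p ^ n then Q (g mod p ^ (n - 1)) else zp_of_int p 0)"

definition in_pLam :: "nat \<Rightarrow> nat \<Rightarrow> nat \<Rightarrow> (nat \<Rightarrow> nat \<Rightarrow> int) \<Rightarrow> bool" where
  "in_pLam p n m F \<longleftrightarrow> (\<exists>G. Lam p n G \<and> F = lam_smult p (zp_of_int p (int p ^ m)) G)"

definition mu_inv :: "nat \<Rightarrow> nat \<Rightarrow> (nat \<Rightarrow> nat \<Rightarrow> int) \<Rightarrow> nat" where
  "mu_inv p n F = (THE m. in_pLam p n m F \<and> \<not> in_pLam p n (Suc m) F)"

definition Fp_elem :: "nat \<Rightarrow> nat \<Rightarrow> (nat \<Rightarrow> int) \<Rightarrow> bool" where
  "Fp_elem p n x \<longleftrightarrow> (\<forall>g. 0 \<le> x g \<and> x g < int p \<and> (p ^ n \<le> g \<longrightarrow> x g = 0))"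

definition fp_add :: "nat \<Rightarrow> (nat \<Rightarrow> int) \<Rightarrow> (nat \<Rightarrow> int) \<Rightarrow> nat \<Rightarrow> int" where
  "fp_add p x y = (\<lambda>g. (x g + y g) mod int p)"

definition fp_mul :: "nat \<Rightarrow> nat \<Rightarrow> (nat \<Rightarrow> int) \<Rightarrow> (nat \<Rightarrow> int) \<Rightarrow> nat \<Rightarrow> int" where
  "fp_mul p n x y = (\<lambda>g. if g < p ^ n
      then (\<Sum>h<p ^ n. x h * y ((g + p ^ n - h) mod p ^ n)) mod int p else 0)"

definition aug_ideal :: "nat \<Rightarrow> nat \<Rightarrow> (nat \<Rightarrow> int) set" where
  "aug_ideal p n = {x. Fp_elem p n x \<and> (\<Sum>g<p ^ n. x g) mod int p = 0}"

inductive_set ideal_prod :: "nat \<Rightarrow> nat \<Rightarrow> (nat \<Rightarrow> int) set \<Rightarrow> (nat \<Rightarrow> int) set \<Rightarrow> (nat \<Rightarrow> int) set"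
  for p n A B where
  zero: "(\<lambda>g. 0) \<in> ideal_prod p n A B"
| step: "x \<in> ideal_prod p n A B \<Longrightarrow> a \<in> A \<Longrightarrow> b \<in> B \<Longrightarrow> fp_add p x (fp_mul p n a b) \<in> ideal_prod p n A B"

fun aug_pow :: "nat \<Rightarrow> nat \<Rightarrow> nat \<Rightarrow> (nat \<Rightarrow> int) set" where
  "aug_pow p n 0 = {x. Fp_elem p n x}"
| "aug_pow p n (Suc l) = ideal_prod p n (aug_pow p n l) (aug_ideal p n)"

definition red :: "(nat \<Rightarrow> nat \<Rightarrow> int) \<Rightarrow> nat \<Rightarrow> int" where
  "red F = (\<lambda>g. F g 1)"

definition lambda_inv :: "nat \<Rightarrow> nat \<Rightarrow> (nat \<Rightarrow> nat \<Rightarrow> int) \<Rightarrow> nat" where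
  "lambda_inv p n F = (THE l.
     (let G = (THE G. Lam p n G \<and> F = lam_smult p (zp_of_int p (int p ^ mu_inv p n F)) G)
      in red G \<in> aug_pow p n l \<and> red G \<notin> aug_pow p n (Suc l)))"

definition q_seq :: "nat \<Rightarrow> nat \<Rightarrow> int" where
  "q_seq p n = (if n < 2 then 0
     else if even n then (\<Sum>i<n. (-1) ^ (n - 1 - i) * int p ^ i)
     else (\<Sum>i\<in>{1..<n}. (-1) ^ (n - 1 - i) * int p ^ i))"

end

theory Submission
  imports Defs "HOL-Computational_Algebra.Polynomial"
begin

text \<open>Everything is read modulo p. Identify F_p[G_n] with F_p[X]/(X^(p^n) - 1) and substitute
  X = 1 + T: since (1 + T)^(p^n) = 1 + T^(p^n) in characteristic p, this is F_p[T]/(T^(p^n)), the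
  augmentation ideal is (T), and the lambda-invariant of an element with mu = 0 is the order at T = 0
  of its reduction. As a lies in pZ_p, the recursion becomes pi(P_(n+1)) = - nu(P_(n-1)) modulo p.
  In the T-coordinate pi is truncation modulo T^(p^n) and nu is multiplication by
  Phi_p((1 + T)^(p^(n-1))) = T^((p-1) p^(n-1)), so lambda(P_(n+1)) = lambda(P_(n-1)) + p^n - p^(n-1)
  as long as this stays below p^n, which it does. This is the recursion of q_n; the unit
  hypotheses give the base cases lambda(P_0) = lambda(P_1) = 0, and nonzero reductions give mu = 0.\<close>

section \<open>Binomial congruences modulo a prime\<close>

lemma dvd_power_diff_power:
  fixes x y :: "'a::comm_ring_1"
  assumes "a dvd x - y"
  shows "a dvd x ^ m - y ^ m"
  using assms by (simp add: power_diff_sumr2)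

lemma prime_dvd_add_power_diff:
  fixes x y :: "'a::comm_ring_1"
  assumes "prime p"
  shows "of_nat p dvd (x + y) ^ p - x ^ p - y ^ p"
proof -
  have p: "p \<noteq> 0" using assms by auto
  have "{..p} = insert p (insert 0 {1..<p})" using p by auto
  then have "(x + y) ^ p = (\<Sum>k\<in>insert p (insert 0 {1..<p}). of_nat (p choose k) * x ^ k * y ^ (p - k))"
    by (simp only: binomial_ring)
  then have binomial: "(x + y) ^ p - x ^ p - y ^ p = (\<Sum>k\<in>{1..<p}. of_nat (p choose k) * x ^ k * y ^ (p - k))"
    using p by simp
  have choose: "of_nat p dvd (of_nat (p choose k) :: 'a)" if "k \<in> {1..<p}" for k
  proof -
    have "p dvd p choose k" using that assms by (intro dvd_choose_prime) auto
    then obtain m where "p choose k = p * m" by (rule dvdE)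
    then show ?thesis by simp
  qed
  show ?thesis
    unfolding binomial by (intro dvd_sum dvd_mult2 choose)
qed

lemma prime_dvd_add_prime_power_diff:
  fixes x y :: "'a::comm_ring_1"
  assumes "prime p"
  shows "of_nat p dvd (x + y) ^ (p ^ k) - x ^ (p ^ k) - y ^ (p ^ k)"
proof (induction k)
  case (Suc k)
  let ?u = "x ^ (p ^ k)" and ?v = "y ^ (p ^ k)"
  have "of_nat p dvd ((x + y) ^ (p ^ k)) ^ p - (?u + ?v) ^ p"
    using Suc by (intro dvd_power_diff_power) (simp add: diff_diff_eq)
  moreover have "of_nat p dvd (?u + ?v) ^ p - ?u ^ p - ?v ^ p"
    by (rule prime_dvd_add_power_diff[OF assms])
  ultimately have "of_nat p dvd ((x + y) ^ (p ^ k)) ^ p - (?u + ?v) ^ p + ((?u + ?v) ^ p - ?u ^ p - ?v ^ p)"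
    by (rule dvd_add)
  then have "of_nat p dvd ((x + y) ^ (p ^ k)) ^ p - ?u ^ p - ?v ^ p"
    by (simp add: algebra_simps)
  then show ?case by (simp add: power_mult[symmetric] mult.commute)
qed simp

section \<open>The group algebra F_p[Z/N] as a quotient of Z[X]\<close>

lemma pcompose_X_power: "pcompose ([:0, 1:] ^ N) Q = Q ^ N"
  by (induction N) (simp_all add: pcompose_mult pcompose_1 pcompose_pCons)

lemma coeff_X_power_mult:
  "coeff ([:0, 1:] ^ N * Q) j = (if j < N then 0 else coeff Q (j - N) :: 'a::comm_semiring_1)"
  using coeff_monom_mult[of 1 N Q j] by (simp add: monom_altdef)

definition cyc_cong :: "nat \<Rightarrow> nat \<Rightarrow> int poly \<Rightarrow> int poly \<Rightarrow> bool" where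
  "cyc_cong p N F G \<longleftrightarrow> (\<exists>A K. F - G = [:int p:] * A + ([:0, 1:] ^ N - 1) * K)"

lemma cyc_cong_refl [simp]: "cyc_cong p N F F"
  unfolding cyc_cong_def by (intro exI[of _ 0]) simp

lemma cyc_cong_iff_diff: "cyc_cong p N F G \<longleftrightarrow> cyc_cong p N (F - G) 0"
  unfolding cyc_cong_def by simp

lemma cyc_cong_if_p_dvd:
  assumes "[:int p:] dvd F - G"
  shows "cyc_cong p N F G"
proof -
  obtain A where "F - G = [:int p:] * A" using assms by (rule dvdE)
  then show ?thesis unfolding cyc_cong_def by (intro exI[of _ A] exI[of _ 0]) simp
qed

lemma cyc_cong_if_dvd:
  assumes "[:0, 1:] ^ N - 1 dvd F - G"
  shows "cyc_cong p N F G"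
proof -
  obtain K where "F - G = ([:0, 1:] ^ N - 1) * K" using assms by (rule dvdE)
  then show ?thesis unfolding cyc_cong_def by (intro exI[of _ 0] exI[of _ K]) simp
qed

lemma cyc_cong_sym: "cyc_cong p N F G \<Longrightarrow> cyc_cong p N G F"
  unfolding cyc_cong_def
proof (elim exE)
  fix A K assume "F - G = [:int p:] * A + ([:0, 1:] ^ N - 1) * K"
  then have "G - F = [:int p:] * (- A) + ([:0, 1:] ^ N - 1) * (- K)"
    by (simp add: algebra_simps)
  then show "\<exists>A K. G - F = [:int p:] * A + ([:0, 1:] ^ N - 1) * K" by blast
qed

lemma cyc_cong_add:
  assumes "cyc_cong p N F G" "cyc_cong p N F' G'"
  shows "cyc_cong p N (F + F') (G + G')"
proof -
  obtain A K A' K' where FG: "F - G = [:int p:] * A + ([:0, 1:] ^ N - 1) * K"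
    and FG': "F' - G' = [:int p:] * A' + ([:0, 1:] ^ N - 1) * K'"
    using assms unfolding cyc_cong_def by blast
  have "F + F' - (G + G') = (F - G) + (F' - G')" by simp
  also have "\<dots> = [:int p:] * (A + A') + ([:0, 1:] ^ N - 1) * (K + K')"
    unfolding FG FG' by (simp add: algebra_simps smult_add_right)
  finally show ?thesis unfolding cyc_cong_def by blast
qed

lemma cyc_cong_trans [trans]:
  assumes "cyc_cong p N F G" "cyc_cong p N G H"
  shows "cyc_cong p N F H"
proof -
  have "cyc_cong p N (F + G) (G + H)" using assms by (rule cyc_cong_add)
  then obtain A K where "F + G - (G + H) = [:int p:] * A + ([:0, 1:] ^ N - 1) * K"
    unfolding cyc_cong_def by blast
  then show ?thesis unfolding cyc_cong_def by auto
qed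

lemma cyc_cong_mult_right: "cyc_cong p N F G \<Longrightarrow> cyc_cong p N (F * H) (G * H)"
  unfolding cyc_cong_def
proof (elim exE)
  fix A K assume "F - G = [:int p:] * A + ([:0, 1:] ^ N - 1) * K"
  then have "F * H - G * H = [:int p:] * (A * H) + ([:0, 1:] ^ N - 1) * (K * H)"
    by (simp add: distrib_right mult.assoc flip: left_diff_distrib)
  then show "\<exists>A K. F * H - G * H = [:int p:] * A + ([:0, 1:] ^ N - 1) * K" by blast
qed

lemma cyc_cong_mult:
  assumes "cyc_cong p N F G" "cyc_cong p N F' G'"
  shows "cyc_cong p N (F * F') (G * G')"
proof (rule cyc_cong_trans)
  show "cyc_cong p N (F * F') (G * F')" by (rule cyc_cong_mult_right[OF assms(1)])
  have "cyc_cong p N (F' * G) (G' * G)" by (rule cyc_cong_mult_right[OF assms(2)])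
  then show "cyc_cong p N (G * F') (G * G')" by (simp only: mult.commute)
qed

lemma cyc_cong_sum:
  "(\<And>x. x \<in> S \<Longrightarrow> cyc_cong p N (f x) (g x)) \<Longrightarrow> cyc_cong p N (sum f S) (sum g S)"
  by (induction S rule: infinite_finite_induct) (auto intro: cyc_cong_add)

lemma cyc_cong_monom_mod: "cyc_cong p N (monom c m) (monom c (m mod N))"
proof (rule cyc_cong_if_dvd)
  let ?X = "[:0, 1:] :: int poly"
  have "?X ^ m = ?X ^ (m mod N + N * (m div N))" by simp
  also have "\<dots> = ?X ^ (m mod N) * (?X ^ N) ^ (m div N)" by (simp only: power_add power_mult)
  finally have "?X ^ m - ?X ^ (m mod N) = ?X ^ (m mod N) * ((?X ^ N) ^ (m div N) - 1)"
    by (simp add: right_diff_distrib)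
  also have "(?X ^ N) ^ (m div N) - 1 = (?X ^ N - 1) * (\<Sum>i<m div N. (?X ^ N) ^ i)"
    by (rule power_diff_1_eq)
  finally have "?X ^ N - 1 dvd ?X ^ m - ?X ^ (m mod N)" by simp
  then show "?X ^ N - 1 dvd monom c m - monom c (m mod N)"
    by (simp add: monom_altdef dvd_smult flip: smult_diff_right)
qed

lemma X_plus_1_power_cong:
  assumes "prime p"
  shows "[:int p:] dvd [:1, 1:] ^ p ^ n - [:0, 1:] ^ p ^ n - 1"
  using prime_dvd_add_prime_power_diff[OF assms, of "[:0, 1:] :: int poly" 1 n]
  by (simp add: of_nat_poly) (simp add: one_pCons)

text \<open>Substituting X = 1 + T: since (1 + T)^(p^n) = 1 + T^(p^n) modulo p, congruence modulo
  (p, X^(p^n) - 1) becomes congruence modulo (p, T^(p^n)).\<close>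
lemma cyc_cong_coeff_pcompose:
  assumes "prime p" "cyc_cong p (p ^ n) F G" "j < p ^ n"
  shows "int p dvd coeff (F \<circ>\<^sub>p [:1, 1:]) j - coeff (G \<circ>\<^sub>p [:1, 1:]) j"
proof -
  let ?X = "[:0, 1:] :: int poly" and ?N = "p ^ n"
  obtain A K where FG: "F - G = [:int p:] * A + (?X ^ ?N - 1) * K"
    using assms(2) unfolding cyc_cong_def by blast
  have "(F - G) \<circ>\<^sub>p [:1, 1:] - ?X ^ ?N * (K \<circ>\<^sub>p [:1, 1:])
      = [:int p:] * (A \<circ>\<^sub>p [:1, 1:]) + ([:1, 1:] ^ ?N - ?X ^ ?N - 1) * (K \<circ>\<^sub>p [:1, 1:])"
    unfolding FG by (simp add: pcompose_add pcompose_mult pcompose_diff pcompose_X_power pcompose_1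
      pcompose_smult algebra_simps)
  also have "[:int p:] dvd \<dots>"
    using X_plus_1_power_cong[OF assms(1)] by (intro dvd_add dvd_mult2) simp_all
  finally have "[:int p:] dvd (F - G) \<circ>\<^sub>p [:1, 1:] - ?X ^ ?N * (K \<circ>\<^sub>p [:1, 1:])" .
  then have "int p dvd coeff ((F - G) \<circ>\<^sub>p [:1, 1:] - ?X ^ ?N * (K \<circ>\<^sub>p [:1, 1:])) j"
    by (simp only: const_poly_dvd_iff)
  then show ?thesis
    using assms(3) by (simp add: coeff_X_power_mult pcompose_diff)
qed

text \<open>An element of F_p[G_n] (a function on {0..<p^n}, see Defs) as a polynomial: the generator
  of G_n becomes X, and equality in F_p[G_n] becomes cyc_cong p (p^n).\<close>
definition grpoly :: "nat \<Rightarrow> (nat \<Rightarrow> int) \<Rightarrow> int poly" where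
  "grpoly N f = (\<Sum>g<N. monom (f g) g)"

lemma coeff_grpoly: "coeff (grpoly N f) i = (if i < N then f i else 0)"
  unfolding grpoly_def coeff_sum by (simp add: coeff_monom)

lemma poly_grpoly_1: "poly (grpoly N f) 1 = (\<Sum>g<N. f g)"
  unfolding grpoly_def poly_sum by (simp add: poly_monom)

lemma grpoly_coeff: "degree F < N \<Longrightarrow> grpoly N (coeff F) = F"
  by (rule poly_eqI) (simp add: coeff_grpoly coeff_eq_0)

lemma grpoly_add: "grpoly N (\<lambda>g. f g + f' g) = grpoly N f + grpoly N f'"
  unfolding grpoly_def by (simp add: add_monom[symmetric] sum.distrib)

lemma grpoly_cong: "(\<And>g. g < N \<Longrightarrow> f g = f' g) \<Longrightarrow> grpoly N f = grpoly N f'"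
  unfolding grpoly_def by (intro sum.cong) auto

lemma cyc_cong_grpoly_mod: "cyc_cong p N (grpoly N (\<lambda>g. f g mod int p)) (grpoly N f)"
  by (rule cyc_cong_if_p_dvd)
    (simp add: const_poly_dvd_iff coeff_grpoly flip: mod_eq_dvd_iff)

lemma cyc_cong_grpoly_fp_add: "cyc_cong p N (grpoly N (fp_add p x y)) (grpoly N x + grpoly N y)"
  unfolding fp_add_def grpoly_add[symmetric] by (rule cyc_cong_grpoly_mod)

lemma sum_lessThan_rotate:
  fixes N h :: nat
  assumes "h < N"
  shows "(\<Sum>g<N. F g ((g + N - h) mod N)) = (\<Sum>k<N. F ((h + k) mod N) k)"
proof -
  have ij: "(h + (g + N - h) mod N) mod N = g" if "g < N" for g
  proof -
    have "(h + (g + N - h) mod N) mod N = (h + (g + N - h)) mod N" by (simp add: mod_add_right_eq)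
    also have "h + (g + N - h) = g + N" using assms by simp
    finally show ?thesis using that by simp
  qed
  have ji: "((h + k) mod N + N - h) mod N = k" if "k < N" for k
  proof -
    have "((h + k) mod N + N - h) mod N = ((h + k) mod N + (N - h)) mod N" using assms by simp
    also have "\<dots> = (h + k + (N - h)) mod N" by (simp add: mod_add_left_eq)
    also have "h + k + (N - h) = k + N" using assms by simp
    finally show ?thesis using that by simp
  qed
  show ?thesis
    by (rule sum.reindex_bij_witness[where i="\<lambda>k. (h + k) mod N" and j="\<lambda>g. (g + N - h) mod N"])
      (use assms ij ji in auto)
qed

lemma cyc_cong_grpoly_fp_mul:
  "cyc_cong p (p ^ n) (grpoly (p ^ n) (fp_mul p n x y)) (grpoly (p ^ n) x * grpoly (p ^ n) y)"
proof -
  let ?N = "p ^ n"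
  define c where "c g = (\<Sum>h<?N. x h * y ((g + ?N - h) mod ?N))" for g
  have "grpoly ?N (fp_mul p n x y) = grpoly ?N (\<lambda>g. c g mod int p)"
    by (rule grpoly_cong) (simp add: fp_mul_def c_def)
  also have "cyc_cong p ?N \<dots> (grpoly ?N c)" by (rule cyc_cong_grpoly_mod)
  also have "grpoly ?N c = (\<Sum>h<?N. \<Sum>g<?N. monom (x h * y ((g + ?N - h) mod ?N)) g)"
    unfolding grpoly_def c_def monom_sum by (rule sum.swap)
  also have "\<dots> = (\<Sum>h<?N. \<Sum>k<?N. monom (x h * y k) ((h + k) mod ?N))"
    by (intro sum.cong refl sum_lessThan_rotate[of _ ?N "\<lambda>g k. monom (x _ * y k) g"]) simp
  also have "cyc_cong p ?N \<dots> (\<Sum>h<?N. \<Sum>k<?N. monom (x h * y k) (h + k))"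
    by (intro cyc_cong_sum cyc_cong_sym[OF cyc_cong_monom_mod])
  also have "\<dots> = grpoly ?N x * grpoly ?N y"
    unfolding grpoly_def sum_product by (simp add: mult_monom)
  finally show ?thesis .
qed

lemma cyc_cong_grpoly_fold:
  assumes "N > 0"
  shows "cyc_cong p N (grpoly M r) (grpoly N (\<lambda>h. \<Sum>g | g < M \<and> g mod N = h. r g))"
proof -
  have "grpoly N (\<lambda>h. \<Sum>g | g < M \<and> g mod N = h. r g)
      = (\<Sum>h<N. \<Sum>g\<in>{g \<in> {..<M}. g mod N = h}. monom (r g) (g mod N))"
    unfolding grpoly_def monom_sum by (intro sum.cong) auto
  also have "\<dots> = (\<Sum>g<M. monom (r g) (g mod N))"
    by (rule sum.group) (auto simp: assms)
  finally have fold: "grpoly N (\<lambda>h. \<Sum>g | g < M \<and> g mod N = h. r g) = (\<Sum>g<M. monom (r g) (g mod N))" .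
  have "cyc_cong p N (\<Sum>g<M. monom (r g) g) (\<Sum>g<M. monom (r g) (g mod N))"
    by (rule cyc_cong_sum) (rule cyc_cong_monom_mod)
  then show ?thesis unfolding fold grpoly_def[of M] .
qed

lemma ex_Fp_elem_cyc_cong:
  assumes "p > 0"
  shows "\<exists>f. Fp_elem p n f \<and> cyc_cong p (p ^ n) (grpoly (p ^ n) f) F"
proof -
  let ?N = "p ^ n" and ?M = "Suc (degree F)"
  define r where "r h = (\<Sum>g | g < ?M \<and> g mod ?N = h. coeff F g)" for h
  have "g mod ?N < ?N" for g using assms by simp
  then have empty: "{g. g < ?M \<and> g mod ?N = h} = {}" if "?N \<le> h" for h
    using that by (auto dest: leD)
  have Fp: "Fp_elem p n (\<lambda>h. r h mod int p)"
    unfolding Fp_elem_def r_def using assms by (simp add: empty)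
  have "cyc_cong p ?N (grpoly ?N (\<lambda>h. r h mod int p)) (grpoly ?N r)"
    by (rule cyc_cong_grpoly_mod)
  also have "cyc_cong p ?N (grpoly ?N r) (grpoly ?M (coeff F))"
    unfolding r_def using assms by (intro cyc_cong_sym[OF cyc_cong_grpoly_fold]) simp
  also have "grpoly ?M (coeff F) = F" by (simp add: grpoly_coeff)
  finally show ?thesis using Fp by blast
qed

lemma p_dvd_if_cyc_cong_0:
  assumes "N > 0" and low: "\<And>i. N \<le> i \<Longrightarrow> coeff D i = 0" and "cyc_cong p N D 0"
  shows "[:int p:] dvd D"
proof -
  obtain A K where D: "D = [:int p:] * A + ([:0, 1:] ^ N - 1) * K"
    using assms(3) unfolding cyc_cong_def by auto
  have "int p dvd coeff K j" for j
  proof (induction j rule: measure_induct_rule[where f="\<lambda>j. Suc (degree K) - j"])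
    case (less j)
    show ?case
    proof (cases "j \<le> degree K")
      case True
      then have IH: "int p dvd coeff K (j + N)" using less assms(1) by simp
      have "coeff (([:0, 1:] ^ N - 1) * K) (j + N) = coeff K j - coeff K (j + N)"
        by (simp add: left_diff_distrib coeff_X_power_mult)
      then have "0 = int p * coeff A (j + N) + coeff K j - coeff K (j + N)"
        using low[of "j + N"] unfolding D by simp
      then have "coeff K j = coeff K (j + N) - int p * coeff A (j + N)" by simp
      then show ?thesis using IH by (simp add: dvd_diff)
    qed (simp add: coeff_eq_0)
  qed
  then have "[:int p:] dvd K" by (simp add: const_poly_dvd_iff)
  then show ?thesis unfolding D by (intro dvd_add dvd_mult dvd_triv_left)
qed

lemma Fp_elem_eqI:
  assumes "p > 0" and f: "Fp_elem p n f" and f': "Fp_elem p n f'"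
    and "cyc_cong p (p ^ n) (grpoly (p ^ n) f) (grpoly (p ^ n) f')"
  shows "f = f'"
proof
  fix g
  have "[:int p:] dvd grpoly (p ^ n) f - grpoly (p ^ n) f'"
    using assms by (intro p_dvd_if_cyc_cong_0) (simp_all add: coeff_grpoly flip: cyc_cong_iff_diff)
  then have "int p dvd coeff (grpoly (p ^ n) f - grpoly (p ^ n) f') g"
    by (simp only: const_poly_dvd_iff)
  then have "g < p ^ n \<Longrightarrow> f g mod int p = f' g mod int p"
    by (simp add: coeff_grpoly mod_eq_dvd_iff)
  then show "f g = f' g"
    using f f' by (cases "g < p ^ n") (auto simp: Fp_elem_def)
qed

section \<open>The augmentation filtration\<close>

text \<open>Order at X = 1 of F modulo p, read off from the expansion in T = X - 1; for F = grpoly f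
  it is the augmentation level of f (aug_pow_iff_le).\<close>
definition order_at_1_ge :: "nat \<Rightarrow> nat \<Rightarrow> int poly \<Rightarrow> bool" where
  "order_at_1_ge p l F \<longleftrightarrow> (\<forall>j<l. int p dvd coeff (F \<circ>\<^sub>p [:1, 1:]) j)"

definition order_at_1_eq :: "nat \<Rightarrow> nat \<Rightarrow> int poly \<Rightarrow> bool" where
  "order_at_1_eq p q F \<longleftrightarrow> order_at_1_ge p q F \<and> \<not> int p dvd coeff (F \<circ>\<^sub>p [:1, 1:]) q"

lemma order_at_1_ge_0 [simp]: "order_at_1_ge p 0 F"
  by (simp add: order_at_1_ge_def)

lemma order_at_1_ge_mono: "order_at_1_ge p l F \<Longrightarrow> l' \<le> l \<Longrightarrow> order_at_1_ge p l' F"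
  by (simp add: order_at_1_ge_def)

lemma order_at_1_ge_1_iff: "order_at_1_ge p 1 F \<longleftrightarrow> int p dvd poly F 1"
  by (simp add: order_at_1_ge_def)

lemma order_at_1_ge_add:
  "order_at_1_ge p l F \<Longrightarrow> order_at_1_ge p l G \<Longrightarrow> order_at_1_ge p l (F + G)"
  by (simp add: order_at_1_ge_def pcompose_add)

lemma order_at_1_ge_mult_Suc:
  assumes F: "order_at_1_ge p l F" and G: "order_at_1_ge p 1 G"
  shows "order_at_1_ge p (Suc l) (F * G)"
  unfolding order_at_1_ge_def pcompose_mult coeff_mult
proof (intro allI impI dvd_sum)
  fix j i assume "j < Suc l" "i \<in> {..j}"
  then consider "i < l" | "i = j" by fastforce
  then show "int p dvd coeff (F \<circ>\<^sub>p [:1, 1:]) i * coeff (G \<circ>\<^sub>p [:1, 1:]) (j - i)"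
    using F G unfolding order_at_1_ge_def by cases simp_all
qed

lemma order_at_1_ge_cyc_cong:
  assumes "prime p" "cyc_cong p (p ^ n) F G" "l \<le> p ^ n"
  shows "order_at_1_ge p l F \<longleftrightarrow> order_at_1_ge p l G"
proof -
  have "int p dvd coeff (F \<circ>\<^sub>p [:1, 1:]) j \<longleftrightarrow> int p dvd coeff (G \<circ>\<^sub>p [:1, 1:]) j"
    if "j < l" for j
  proof -
    have d: "int p dvd coeff (F \<circ>\<^sub>p [:1, 1:]) j - coeff (G \<circ>\<^sub>p [:1, 1:]) j"
      using order.strict_trans2[OF that assms(3)] by (rule cyc_cong_coeff_pcompose[OF assms(1,2)])
    show ?thesis
    proof
      assume "int p dvd coeff (F \<circ>\<^sub>p [:1, 1:]) j"
      from dvd_diff[OF this d] show "int p dvd coeff (G \<circ>\<^sub>p [:1, 1:]) j" by simp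
    next
      assume "int p dvd coeff (G \<circ>\<^sub>p [:1, 1:]) j"
      from dvd_add[OF d this] show "int p dvd coeff (F \<circ>\<^sub>p [:1, 1:]) j" by simp
    qed
  qed
  then show ?thesis unfolding order_at_1_ge_def by blast
qed

lemma order_at_1_ge_SucE:
  assumes "order_at_1_ge p (Suc l) F"
  obtains B where "[:int p:] dvd F - [:-1, 1:] * B" "order_at_1_ge p l B"
proof -
  obtain c B' where FT: "F \<circ>\<^sub>p [:1, 1:] = pCons c B'" by (metis pCons_cases)
  define B where "B = B' \<circ>\<^sub>p [:-1, 1:]"
  have "F = (F \<circ>\<^sub>p [:1, 1:]) \<circ>\<^sub>p [:-1, 1:]"
    by (simp add: pcompose_assoc[symmetric] pcompose_pCons)
  also have "\<dots> = [:c:] + [:-1, 1:] * B"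
    unfolding FT B_def by (simp add: pcompose_pCons)
  finally have FB: "F - [:-1, 1:] * B = [:c:]" by simp
  have "int p dvd coeff (F \<circ>\<^sub>p [:1, 1:]) 0"
    using assms zero_less_Suc unfolding order_at_1_ge_def by blast
  then have "int p dvd c" by (simp add: FT)
  then have "[:int p:] dvd F - [:-1, 1:] * B" unfolding FB by simp
  moreover have "B \<circ>\<^sub>p [:1, 1:] = B'"
    unfolding B_def pcompose_assoc[symmetric] by (simp add: pcompose_pCons)
  then have "order_at_1_ge p l B"
    using assms unfolding order_at_1_ge_def FT by (metis Suc_mono coeff_pCons_Suc)
  ultimately show ?thesis by (rule that)
qed

lemma aug_ideal_iff:
  "b \<in> aug_ideal p n \<longleftrightarrow> Fp_elem p n b \<and> order_at_1_ge p 1 (grpoly (p ^ n) b)"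
  unfolding aug_ideal_def order_at_1_ge_1_iff by (simp add: poly_grpoly_1 dvd_eq_mod_eq_0)

lemma Fp_elem_fp_add:
  "p > 0 \<Longrightarrow> Fp_elem p n x \<Longrightarrow> Fp_elem p n y \<Longrightarrow> Fp_elem p n (fp_add p x y)"
  by (auto simp: Fp_elem_def fp_add_def)

lemma Fp_elem_fp_mul: "p > 0 \<Longrightarrow> Fp_elem p n (fp_mul p n x y)"
  by (auto simp: Fp_elem_def fp_mul_def)

lemma fp_add_zero_left:
  assumes "Fp_elem p n x"
  shows "fp_add p (\<lambda>g. 0) x = x"
proof
  fix g
  have "0 \<le> x g" "x g < int p" using assms by (auto simp: Fp_elem_def)
  then show "fp_add p (\<lambda>g. 0) x g = x g" by (simp add: fp_add_def)
qed

lemma aug_pow_order_at_1_ge: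
  assumes "prime p" "x \<in> aug_pow p n l"
  shows "Fp_elem p n x \<and> order_at_1_ge p (min l (p ^ n)) (grpoly (p ^ n) x)"
  using assms(2)
proof (induction l arbitrary: x)
  case (Suc l)
  let ?N = "p ^ n" and ?G = "grpoly (p ^ n)"
  have p: "p > 0" using assms(1) prime_gt_0_nat by blast
  from Suc.prems have "x \<in> ideal_prod p n (aug_pow p n l) (aug_ideal p n)" by simp
  then show ?case
  proof (induction rule: ideal_prod.induct)
    case zero
    show ?case using p by (simp add: Fp_elem_def order_at_1_ge_def grpoly_def)
  next
    case (step x a b)
    have "Fp_elem p n a" "order_at_1_ge p (min l ?N) (?G a)" using Suc.IH step by auto
    moreover have "Fp_elem p n b" "order_at_1_ge p 1 (?G b)" using step by (auto simp: aug_ideal_iff)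
    ultimately have "order_at_1_ge p (Suc (min l ?N)) (?G a * ?G b)"
      by (intro order_at_1_ge_mult_Suc)
    then have "order_at_1_ge p (min (Suc l) ?N) (?G x + ?G a * ?G b)"
      using step by (intro order_at_1_ge_add) (auto elim: order_at_1_ge_mono)
    moreover have "cyc_cong p ?N (?G (fp_add p x (fp_mul p n a b))) (?G x + ?G a * ?G b)"
      using cyc_cong_grpoly_fp_add cyc_cong_add[OF cyc_cong_refl cyc_cong_grpoly_fp_mul]
      by (rule cyc_cong_trans)
    ultimately have "order_at_1_ge p (min (Suc l) ?N) (?G (fp_add p x (fp_mul p n a b)))"
      using order_at_1_ge_cyc_cong[OF assms(1)] by simp
    moreover have "Fp_elem p n (fp_add p x (fp_mul p n a b))"
      using p step Fp_elem_fp_mul by (intro Fp_elem_fp_add) simp_all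
    ultimately show ?case by simp
  qed
qed simp

lemma order_at_1_ge_aug_pow:
  assumes "prime p" "Fp_elem p n f" "l \<le> p ^ n" "order_at_1_ge p l (grpoly (p ^ n) f)"
  shows "f \<in> aug_pow p n l"
  using assms(2-)
proof (induction l arbitrary: f)
  case (Suc l)
  let ?N = "p ^ n" and ?G = "grpoly (p ^ n)"
  have p: "p > 0" using assms(1) prime_gt_0_nat by blast
  obtain B where B: "[:int p:] dvd ?G f - [:-1, 1:] * B" "order_at_1_ge p l B"
    using Suc.prems(3) by (rule order_at_1_ge_SucE)
  obtain a where a: "Fp_elem p n a" "cyc_cong p ?N (?G a) B"
    using ex_Fp_elem_cyc_cong[OF p, of n B] by blast
  obtain b where b: "Fp_elem p n b" "cyc_cong p ?N (?G b) [:-1, 1:]"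
    using ex_Fp_elem_cyc_cong[OF p, of n "[:-1, 1:]"] by blast
  have a_pow: "a \<in> aug_pow p n l"
    using Suc.prems(2) B(2) order_at_1_ge_cyc_cong[OF assms(1) a(2), of l]
    by (intro Suc.IH[OF a(1)]) simp_all
  have b_ideal: "b \<in> aug_ideal p n"
    using b order_at_1_ge_cyc_cong[OF assms(1) b(2), of 1] p
    by (simp add: aug_ideal_iff order_at_1_ge_def Suc_leI)
  have ab: "fp_mul p n a b = f"
  proof (rule Fp_elem_eqI[OF p Fp_elem_fp_mul[OF p] Suc.prems(1)])
    have "cyc_cong p ?N (?G (fp_mul p n a b)) (?G a * ?G b)" by (rule cyc_cong_grpoly_fp_mul)
    also have "cyc_cong p ?N \<dots> (B * [:-1, 1:])" by (rule cyc_cong_mult[OF a(2) b(2)])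
    also have "\<dots> = [:-1, 1:] * B" by (rule mult.commute)
    also have "cyc_cong p ?N \<dots> (?G f)"
      using B(1) by (rule cyc_cong_sym[OF cyc_cong_if_p_dvd])
    finally show "cyc_cong p ?N (?G (fp_mul p n a b)) (?G f)" .
  qed
  have "fp_add p (\<lambda>g. 0) (fp_mul p n a b) \<in> ideal_prod p n (aug_pow p n l) (aug_ideal p n)"
    by (rule ideal_prod.step[OF ideal_prod.zero a_pow b_ideal])
  then show ?case
    by (simp add: ab fp_add_zero_left[OF Suc.prems(1)])
qed simp

lemma aug_pow_iff_le:
  assumes "prime p" "Fp_elem p n f" "order_at_1_eq p q (grpoly (p ^ n) f)" "q < p ^ n"
  shows "f \<in> aug_pow p n l \<longleftrightarrow> l \<le> q"
proof
  assume "f \<in> aug_pow p n l"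
  then have "order_at_1_ge p (min l (p ^ n)) (grpoly (p ^ n) f)"
    using aug_pow_order_at_1_ge[OF assms(1)] by blast
  show "l \<le> q"
  proof (rule ccontr)
    assume "\<not> l \<le> q"
    then have "q < min l (p ^ n)" using assms(4) by simp
    with \<open>order_at_1_ge p (min l (p ^ n)) _\<close> assms(3) show False
      unfolding order_at_1_eq_def order_at_1_ge_def by blast
  qed
next
  assume "l \<le> q"
  with assms(3) have "order_at_1_ge p l (grpoly (p ^ n) f)"
    unfolding order_at_1_eq_def by (blast intro: order_at_1_ge_mono)
  then show "f \<in> aug_pow p n l"
    using \<open>l \<le> q\<close> assms by (intro order_at_1_ge_aug_pow) simp_all
qed

lemma aug_level_eq:
  assumes "prime p" "Fp_elem p n f" "order_at_1_eq p q (grpoly (p ^ n) f)" "q < p ^ n"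
  shows "(THE l. f \<in> aug_pow p n l \<and> f \<notin> aug_pow p n (Suc l)) = q"
proof -
  have iff: "\<And>l. f \<in> aug_pow p n l \<longleftrightarrow> l \<le> q" by (rule aug_pow_iff_le[OF assms])
  show ?thesis by (rule the_equality) (auto simp del: aug_pow.simps simp: iff)
qed

section \<open>Projection and norm maps\<close>

lemma p_dvd_X_power_mult_cancel:
  assumes "[:int p:] dvd [:0, 1:] ^ M * Q"
  shows "[:int p:] dvd Q"
  unfolding const_poly_dvd_iff
proof
  fix j
  have "int p dvd coeff ([:0, 1:] ^ M * Q) (j + M)" using assms by (simp only: const_poly_dvd_iff)
  then show "int p dvd coeff Q j" by (simp add: coeff_X_power_mult)
qed

lemma grpoly_nu:
  "grpoly (p * M) (\<lambda>h. r (h mod M)) = grpoly M r * (\<Sum>t<p. ([:0, 1:] ^ M) ^ t)"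
proof -
  let ?X = "[:0, 1:] :: int poly"
  have "grpoly (p * M) (\<lambda>h. r (h mod M)) = (\<Sum>h<p * M. smult (r (h mod M)) (?X ^ h))"
    by (simp add: grpoly_def monom_altdef)
  also have "\<dots> = (\<Sum>t<p. \<Sum>h\<in>{t * M..<t * M + M}. smult (r (h mod M)) (?X ^ h))"
    by (rule sum.nat_group[symmetric])
  also have "\<dots> = (\<Sum>t<p. \<Sum>s<M. smult (r s) (?X ^ s) * (?X ^ M) ^ t)"
  proof (rule sum.cong[OF refl])
    fix t
    have "(\<Sum>h\<in>{t * M..<t * M + M}. smult (r (h mod M)) (?X ^ h))
        = (\<Sum>h\<in>{0 + t * M..<M + t * M}. smult (r (h mod M)) (?X ^ h))" by (simp add: add.commute)
    also have "\<dots> = (\<Sum>s\<in>{0..<M}. smult (r ((s + t * M) mod M)) (?X ^ (s + t * M)))"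
      by (rule sum.shift_bounds_nat_ivl)
    also have "\<dots> = (\<Sum>s<M. smult (r s) (?X ^ s) * (?X ^ M) ^ t)"
      by (intro sum.cong) (auto simp: power_add power_mult[symmetric] mult.commute)
    finally show "(\<Sum>h\<in>{t * M..<t * M + M}. smult (r (h mod M)) (?X ^ h))
        = (\<Sum>s<M. smult (r s) (?X ^ s) * (?X ^ M) ^ t)" .
  qed
  also have "\<dots> = grpoly M r * (\<Sum>t<p. (?X ^ M) ^ t)"
    by (simp add: grpoly_def monom_altdef sum_distrib_left sum_distrib_right)
  finally show ?thesis .
qed

text \<open>The sum is Phi_p(X^(p^k)) = (X^(p^(k+1)) - 1) / (X^(p^k) - 1). In T = X - 1, numerator and
  denominator are T^(p^(k+1)) and T^(p^k) modulo p, and T^(p^k) can be cancelled.\<close>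
lemma cyclotomic_pcompose_cong:
  assumes "prime p"
  shows "[:int p:] dvd (\<Sum>t<p. ([:0, 1:] ^ p ^ k) ^ t) \<circ>\<^sub>p [:1, 1:] - [:0, 1:] ^ ((p - 1) * p ^ k)"
proof -
  let ?X = "[:0, 1:] :: int poly" and ?M = "p ^ k"
  define \<Phi> where "\<Phi> = (\<Sum>t<p. (?X ^ ?M) ^ t) \<circ>\<^sub>p [:1, 1:]"
  have "(?X ^ ?M) ^ p - 1 = (?X ^ ?M - 1) * (\<Sum>t<p. (?X ^ ?M) ^ t)" by (rule power_diff_1_eq)
  then have "((?X ^ ?M) ^ p - 1) \<circ>\<^sub>p [:1, 1:] = (?X ^ ?M - 1) \<circ>\<^sub>p [:1, 1:] * \<Phi>"
    by (simp add: \<Phi>_def pcompose_mult)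
  then have e: "[:1, 1:] ^ (p * ?M) - 1 = ([:1, 1:] ^ ?M - 1) * \<Phi>"
    by (simp add: pcompose_diff pcompose_X_power pcompose_1 mult.commute flip: power_mult)
  have "p * ?M = ?M + (p - 1) * ?M"
    using prime_gt_0_nat[OF assms] by (cases p) simp_all
  then have split: "?X ^ (p * ?M) = ?X ^ ?M * ?X ^ ((p - 1) * ?M)"
    by (simp flip: power_add)
  have "[:int p:] dvd [:1, 1:] ^ (p * ?M) - ?X ^ (p * ?M) - 1"
    using X_plus_1_power_cong[OF assms, of "Suc k"] by simp
  then have "[:int p:] dvd ([:1, 1:] ^ (p * ?M) - ?X ^ (p * ?M) - 1) - ([:1, 1:] ^ ?M - ?X ^ ?M - 1) * \<Phi>"
    using X_plus_1_power_cong[OF assms, of k] by (rule dvd_diff[OF _ dvd_mult2])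
  also have "([:1, 1:] ^ (p * ?M) - ?X ^ (p * ?M) - 1) - ([:1, 1:] ^ ?M - ?X ^ ?M - 1) * \<Phi>
      = ([:1, 1:] ^ (p * ?M) - 1) - ([:1, 1:] ^ ?M - 1) * \<Phi> + ?X ^ ?M * \<Phi> - ?X ^ (p * ?M)"
    by (simp add: algebra_simps)
  also have "\<dots> = ?X ^ ?M * (\<Phi> - ?X ^ ((p - 1) * ?M))"
    unfolding e split by (simp add: algebra_simps)
  finally show ?thesis unfolding \<Phi>_def by (rule p_dvd_X_power_mult_cancel)
qed

lemma coeff_pcompose_nu_cong:
  assumes "prime p" "j < p ^ Suc m"
    and "cyc_cong p (p ^ Suc m) F (- (G * (\<Sum>t<p. ([:0, 1:] ^ p ^ m) ^ t)))"
  shows "int p dvd coeff (F \<circ>\<^sub>p [:1, 1:]) j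
    + (if j < (p - 1) * p ^ m then 0 else coeff (G \<circ>\<^sub>p [:1, 1:]) (j - (p - 1) * p ^ m))"
proof -
  let ?X = "[:0, 1:] :: int poly" and ?D = "(p - 1) * p ^ m"
  let ?G = "G \<circ>\<^sub>p [:1, 1:]" and ?\<Phi> = "(\<Sum>t<p. ([:0, 1:] ^ p ^ m) ^ t) \<circ>\<^sub>p [:1, 1:]"
  have "int p dvd coeff (F \<circ>\<^sub>p [:1, 1:]) j - coeff (- (G * (\<Sum>t<p. ([:0, 1:] ^ p ^ m) ^ t)) \<circ>\<^sub>p [:1, 1:]) j"
    using assms by (intro cyc_cong_coeff_pcompose)
  then have 1: "int p dvd coeff (F \<circ>\<^sub>p [:1, 1:]) j + coeff (?G * ?\<Phi>) j"
    by (simp add: pcompose_uminus pcompose_mult)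
  have "[:int p:] dvd ?G * (?\<Phi> - ?X ^ ?D)"
    using cyclotomic_pcompose_cong[OF assms(1)] by (rule dvd_mult)
  then have "int p dvd coeff (?G * ?\<Phi>) j - coeff (?X ^ ?D * ?G) j"
    by (simp add: const_poly_dvd_iff algebra_simps)
  from dvd_diff[OF 1 this] have "int p dvd coeff (F \<circ>\<^sub>p [:1, 1:]) j + coeff (?X ^ ?D * ?G) j"
    by simp
  then show ?thesis unfolding coeff_X_power_mult .
qed

lemma order_at_1_eq_nu_cong:
  assumes "prime p" "order_at_1_eq p q G" "q < p ^ m"
    and "cyc_cong p (p ^ Suc m) F (- (G * (\<Sum>t<p. ([:0, 1:] ^ p ^ m) ^ t)))"
  shows "order_at_1_eq p (q + (p - 1) * p ^ m) F"
proof -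
  let ?D = "(p - 1) * p ^ m"
  have p: "p > 0" using prime_gt_0_nat[OF assms(1)] .
  have "p ^ Suc m = p ^ m + ?D" using p by (cases p) simp_all
  then have bound: "q + ?D < p ^ Suc m" using assms(3) by linarith
  have rel: "int p dvd coeff (F \<circ>\<^sub>p [:1, 1:]) j + (if j < ?D then 0 else coeff (G \<circ>\<^sub>p [:1, 1:]) (j - ?D))"
    if "j \<le> q + ?D" for j
    using that bound by (intro coeff_pcompose_nu_cong[OF assms(1) _ assms(4)]) simp
  have "int p dvd coeff (F \<circ>\<^sub>p [:1, 1:]) j" if "j < q + ?D" for j
  proof (cases "j < ?D")
    case False
    then have "int p dvd coeff (G \<circ>\<^sub>p [:1, 1:]) (j - ?D)"
      using that assms(2) unfolding order_at_1_eq_def order_at_1_ge_def by simp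
    then show ?thesis using rel[of j] that False by (simp add: dvd_add_left_iff)
  qed (use rel[of j] that in simp)
  moreover have "\<not> int p dvd coeff (F \<circ>\<^sub>p [:1, 1:]) (q + ?D)"
  proof
    assume "int p dvd coeff (F \<circ>\<^sub>p [:1, 1:]) (q + ?D)"
    with rel[of "q + ?D"] have "int p dvd coeff (G \<circ>\<^sub>p [:1, 1:]) q"
      by (simp add: dvd_add_right_iff)
    with assms(2) show False unfolding order_at_1_eq_def by blast
  qed
  ultimately show ?thesis unfolding order_at_1_eq_def order_at_1_ge_def by blast
qed

lemma q_seq_alt: "q_seq p n = (\<Sum>i\<in>{(if even n then 0 else 1)..<n}. (-1) ^ (n - 1 - i) * int p ^ i)"
proof (cases "n < 2")
  case True
  then have "n = 0 \<or> n = 1" by auto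
  then show ?thesis by (auto simp: q_seq_def)
qed (auto simp: q_seq_def atLeast0LessThan)

lemma q_seq_Suc_Suc: "q_seq p (Suc (Suc m)) = q_seq p m + int p ^ Suc m - int p ^ m"
proof -
  define s where "s = (if even m then 0 else 1 :: nat)"
  have s: "s \<le> m" by (cases "even m") (auto simp: s_def elim: oddE)
  have "q_seq p (Suc (Suc m)) = (\<Sum>i\<in>{s..<Suc (Suc m)}. (-1) ^ (Suc m - i) * int p ^ i)"
    unfolding q_seq_alt s_def by simp
  also have "\<dots> = (\<Sum>i\<in>{s..<m}. (-1) ^ (Suc m - i) * int p ^ i) - int p ^ m + int p ^ Suc m"
    using s by (simp add: sum.atLeastLessThan_Suc Suc_diff_le)
  also have "(\<Sum>i\<in>{s..<m}. (-1) ^ (Suc m - i) * int p ^ i) = q_seq p m"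
    unfolding q_seq_alt s_def[symmetric]
  proof (rule sum.cong[OF refl])
    fix i assume "i \<in> {s..<m}"
    then have "Suc m - i = Suc (Suc (m - 1 - i))" by auto
    then show "(-1) ^ (Suc m - i) * int p ^ i = (-1) ^ (m - 1 - i) * int p ^ i" by simp
  qed
  finally show ?thesis by simp
qed

lemma q_seq_bounds: "p > 0 \<Longrightarrow> 0 \<le> q_seq p n \<and> q_seq p n < int p ^ n"
proof (induction n rule: nat_induct2)
  case (step m)
  have "int p ^ m \<le> int p ^ Suc m" "int p ^ Suc m \<le> int p ^ (m + 2)"
    using step.prems by (simp_all add: power_increasing)
  moreover have "q_seq p (m + 2) = q_seq p m + int p ^ Suc m - int p ^ m"
    using q_seq_Suc_Suc[of p m] by (simp only: add_2_eq_Suc')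
  ultimately show ?case using step by linarith
qed (simp_all add: q_seq_def)

lemma nat_q_seq_less: "p > 0 \<Longrightarrow> nat (q_seq p n) < p ^ n"
  using q_seq_bounds[of p n] by (simp add: nat_less_iff)

lemma nat_q_seq_Suc_Suc:
  assumes "p > 0"
  shows "nat (q_seq p (Suc (Suc m))) = nat (q_seq p m) + (p - 1) * p ^ m"
proof -
  have "int ((p - 1) * p ^ m) = int p ^ Suc m - int p ^ m"
    using assms by (simp add: of_nat_diff algebra_simps)
  then show ?thesis
    using q_seq_bounds[OF assms, of m] q_seq_bounds[OF assms, of "Suc (Suc m)"] q_seq_Suc_Suc[of p m]
    by linarith
qed

section \<open>The invariants mu and lambda\<close>

lemma Fp_elem_red:
  assumes "p > 0" "Lam p n F"
  shows "Fp_elem p n (red F)"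
  unfolding Fp_elem_def red_def
proof
  fix g
  show "0 \<le> F g 1 \<and> F g 1 < int p \<and> (p ^ n \<le> g \<longrightarrow> F g 1 = 0)"
  proof (cases "g < p ^ n")
    case True
    then have "zp p (F g)" using assms(2) by (simp add: Lam_def)
    then have "0 \<le> F g 1 \<and> F g 1 < int p ^ 1" unfolding zp_def by blast
    then show ?thesis using True by simp
  next
    case False
    then show ?thesis using assms by (simp add: Lam_def zp_of_int_def)
  qed
qed

lemma lam_smult_1:
  assumes "p > 1" "Lam p n G"
  shows "lam_smult p (zp_of_int p (int p ^ 0)) G = G"
proof (intro ext)
  fix g k
  have "zp p (G g)" using assms by (cases "g < p ^ n") (auto simp: Lam_def zp_def zp_of_int_def)
  then have "0 \<le> G g k" "G g k < int p ^ k" unfolding zp_def by blast+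
  moreover have "lam_smult p (zp_of_int p (int p ^ 0)) G g k = G g k mod int p ^ k"
    by (simp add: lam_smult_def zp_mul_def zp_of_int_def mod_mult_left_eq)
  ultimately show "lam_smult p (zp_of_int p (int p ^ 0)) G g k = G g k" by simp
qed

lemma red_lam_smult_p_power:
  assumes "m \<ge> 1"
  shows "red (lam_smult p (zp_of_int p (int p ^ m)) G) = (\<lambda>g. 0)"
proof -
  have "int p ^ m mod int p = 0" using assms by (simp add: dvd_power)
  then show ?thesis by (simp add: red_def lam_smult_def zp_mul_def zp_of_int_def)
qed

lemma mu_inv_eq_0:
  assumes "p > 1" "Lam p n F" "red F \<noteq> (\<lambda>g. 0)"
  shows "mu_inv p n F = 0"
  unfolding mu_inv_def
proof (rule the_equality)
  show "in_pLam p n 0 F \<and> \<not> in_pLam p n (Suc 0) F"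
    using assms lam_smult_1 red_lam_smult_p_power[of 1] unfolding in_pLam_def by fastforce
next
  fix m assume "in_pLam p n m F \<and> \<not> in_pLam p n (Suc m) F"
  then show "m = 0"
    using assms(3) red_lam_smult_p_power[of m] unfolding in_pLam_def by fastforce
qed

lemma lambda_inv_eq:
  assumes "p > 1" "Lam p n F" "red F \<noteq> (\<lambda>g. 0)"
  shows "lambda_inv p n F = (THE l. red F \<in> aug_pow p n l \<and> red F \<notin> aug_pow p n (Suc l))"
proof -
  have "(THE G. Lam p n G \<and> F = lam_smult p (zp_of_int p (int p ^ mu_inv p n F)) G) = F"
    unfolding mu_inv_eq_0[OF assms]
    using assms(2) lam_smult_1[OF assms(1)] by (intro the_equality) auto
  then show ?thesis unfolding lambda_inv_def Let_def by simp
qed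

lemma invariants_of_order_at_1_eq:
  assumes "prime p" "Lam p n F" "order_at_1_eq p q (grpoly (p ^ n) (red F))" "q < p ^ n"
  shows "F \<noteq> (\<lambda>g. zp_of_int p 0) \<and> mu_inv p n F = 0 \<and> lambda_inv p n F = q"
proof -
  have p: "p > 1" using assms(1) prime_gt_1_nat by blast
  have red: "red F \<noteq> (\<lambda>g. 0)"
  proof
    assume "red F = (\<lambda>g. 0)"
    then have "grpoly (p ^ n) (red F) = 0" by (simp add: grpoly_def)
    with assms(3) show False by (simp add: order_at_1_eq_def)
  qed
  then have "F \<noteq> (\<lambda>g. zp_of_int p 0)" by (auto simp: red_def zp_of_int_def)
  moreover have "lambda_inv p n F = q"
    unfolding lambda_inv_eq[OF p assms(2) red]
    using assms Fp_elem_red[OF _ assms(2)] p by (intro aug_level_eq) simp_all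
  ultimately show ?thesis using mu_inv_eq_0[OF p assms(2) red] by blast
qed

section \<open>Reduction of the hypotheses modulo p\<close>

lemma zp_unit_residue:
  assumes "p > 1" "zp_unit p x"
  shows "\<not> int p dvd x 1"
proof
  assume x: "int p dvd x 1"
  obtain y where "zp_mul p x y = zp_of_int p 1" using assms(2) unfolding zp_unit_def by blast
  then have "zp_mul p x y 1 = zp_of_int p 1 1" by simp
  then have "int p dvd x 1 * y 1 - 1" by (simp add: zp_mul_def zp_of_int_def mod_eq_dvd_iff)
  from dvd_diff[OF dvd_mult2[OF x, of "y 1"] this] have "int p dvd 1" by simp
  with assms(1) show False by simp
qed

lemma zp_in_pZp_residue: "zp_in_pZp p a \<Longrightarrow> a 1 = 0"
  by (auto simp: zp_in_pZp_def zp_mul_def zp_of_int_def)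

lemma order_at_1_eq_0_iff: "order_at_1_eq p 0 (grpoly N f) \<longleftrightarrow> \<not> int p dvd (\<Sum>g<N. f g)"
  by (simp add: order_at_1_eq_def poly_grpoly_1)

lemma order_at_1_eq_pi_1:
  assumes "prime p" "lam_pi p 1 F = lam_smult p u G" "zp_unit p u" "zp_unit p (G 0)"
  shows "order_at_1_eq p 0 (grpoly p (red F))"
proof -
  have p: "p > 1" using assms(1) prime_gt_1_nat by blast
  have "{g. g < p \<and> g mod 1 = 0} = {..<p}" by auto
  then have "lam_pi p 1 F 0 1 = (\<Sum>g<p. F g 1) mod int p"
    by (simp add: lam_pi_def zp_sum_def)
  moreover have "lam_smult p u G 0 1 = (u 1 * G 0 1) mod int p"
    by (simp add: lam_smult_def zp_mul_def)
  ultimately have "(\<Sum>g<p. F g 1) mod int p = (u 1 * G 0 1) mod int p"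
    using assms(2) by simp
  moreover have "\<not> int p dvd u 1 * G 0 1"
    using zp_unit_residue[OF p assms(3)] zp_unit_residue[OF p assms(4)] assms(1)
    by (simp add: prime_dvd_mult_iff)
  ultimately show ?thesis
    by (simp add: order_at_1_eq_0_iff red_def dvd_eq_mod_eq_0)
qed

lemma recursion_residue:
  assumes "lam_pi p (Suc n) F = lam_add p (lam_smult p a G) (lam_neg p (lam_nu p n H))"
    and "a 1 = 0" "h < p ^ n"
  shows "int p dvd (\<Sum>g | g < p ^ Suc n \<and> g mod p ^ n = h. red F g) + red H (h mod p ^ (n - 1))"
proof -
  have "(\<Sum>g | g < p ^ Suc n \<and> g mod p ^ n = h. F g 1) mod int p = (- H (h mod p ^ (n - 1)) 1) mod int p"
    using fun_cong[OF fun_cong[OF assms(1), of h], of 1] assms(2,3)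
    by (simp add: lam_pi_def zp_sum_def lam_add_def zp_add_def lam_smult_def zp_mul_def
        lam_neg_def zp_neg_def lam_nu_def)
  then show ?thesis by (simp add: mod_eq_dvd_iff red_def)
qed

lemma cyc_cong_recursion:
  assumes "p > 0"
    and "\<And>h. h < p ^ Suc m \<Longrightarrow>
      int p dvd (\<Sum>g | g < p ^ Suc (Suc m) \<and> g mod p ^ Suc m = h. r g) + r0 (h mod p ^ m)"
  shows "cyc_cong p (p ^ Suc m) (grpoly (p ^ Suc (Suc m)) r)
    (- (grpoly (p ^ m) r0 * (\<Sum>t<p. ([:0, 1:] ^ p ^ m) ^ t)))"
proof -
  let ?fold = "\<lambda>h. \<Sum>g | g < p ^ Suc (Suc m) \<and> g mod p ^ Suc m = h. r g"
  have "cyc_cong p (p ^ Suc m) (grpoly (p ^ Suc (Suc m)) r) (grpoly (p ^ Suc m) ?fold)"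
    using assms(1) by (intro cyc_cong_grpoly_fold) simp
  also have "cyc_cong p (p ^ Suc m) \<dots> (- grpoly (p ^ Suc m) (\<lambda>h. r0 (h mod p ^ m)))"
    using assms(2) by (intro cyc_cong_if_p_dvd) (simp add: const_poly_dvd_iff coeff_grpoly)
  also have "grpoly (p ^ Suc m) (\<lambda>h. r0 (h mod p ^ m)) = grpoly (p ^ m) r0 * (\<Sum>t<p. ([:0, 1:] ^ p ^ m) ^ t)"
    using grpoly_nu[of p "p ^ m" r0] by simp
  finally show ?thesis .
qed

lemma order_at_1_eq_recursion:
  assumes "prime p" "a 1 = 0"
    and "lam_pi p (Suc (Suc m)) F = lam_add p (lam_smult p a G) (lam_neg p (lam_nu p (Suc m) H))"
    and "order_at_1_eq p q (grpoly (p ^ m) (red H))" "q < p ^ m"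
  shows "order_at_1_eq p (q + (p - 1) * p ^ m) (grpoly (p ^ Suc (Suc m)) (red F))"
proof -
  have "cyc_cong p (p ^ Suc m) (grpoly (p ^ Suc (Suc m)) (red F))
      (- (grpoly (p ^ m) (red H) * (\<Sum>t<p. ([:0, 1:] ^ p ^ m) ^ t)))"
    using recursion_residue[OF assms(3,2)] prime_gt_0_nat[OF assms(1)]
    by (intro cyc_cong_recursion) simp_all
  then show ?thesis using assms(1,4,5) by (intro order_at_1_eq_nu_cong)
qed

theorem lemma5p1:
  fixes p :: nat and a :: "nat \<Rightarrow> int" and P :: "nat \<Rightarrow> nat \<Rightarrow> nat \<Rightarrow> int"
  assumes "prime p" and "odd p"
    and "zp_in_pZp p a"
    and "\<forall>n. Lam p n (P n)"
    and "zp_unit p (P 0 0)"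
    and "\<exists>u. zp_unit p u \<and> lam_pi p 1 (P 1) = lam_smult p u (P 0)"
    and "\<forall>n\<ge>1. lam_pi p (n + 1) (P (n + 1)) =
           lam_add p (lam_smult p a (P n)) (lam_neg p (lam_nu p n (P (n - 1))))"
  shows "\<forall>n. P n \<noteq> (\<lambda>g. zp_of_int p 0) \<and> mu_inv p n (P n) = 0
             \<and> int (lambda_inv p n (P n)) = q_seq p n"
proof -
  have p1: "p > 1" using assms(1) prime_gt_1_nat by blast
  then have p: "p > 0" by simp
  have order: "order_at_1_eq p (nat (q_seq p n)) (grpoly (p ^ n) (red (P n)))" for n
  proof (induction n rule: nat_induct2)
    case 0
    show ?case using zp_unit_residue[OF p1 assms(5)] by (simp add: order_at_1_eq_0_iff q_seq_def red_def)
  next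
    case 1
    obtain u where "zp_unit p u" "lam_pi p 1 (P 1) = lam_smult p u (P 0)" using assms(6) by blast
    from order_at_1_eq_pi_1[OF assms(1) this(2,1) assms(5)] show ?case by (simp add: q_seq_def)
  next
    case (step m)
    have "lam_pi p (Suc (Suc m)) (P (Suc (Suc m)))
        = lam_add p (lam_smult p a (P (Suc m))) (lam_neg p (lam_nu p (Suc m) (P m)))"
      using assms(7)[rule_format, of "Suc m"] by simp
    from order_at_1_eq_recursion[OF assms(1) zp_in_pZp_residue[OF assms(3)] this step nat_q_seq_less[OF p]]
    show ?case by (simp add: nat_q_seq_Suc_Suc[OF p])
  qed
  show ?thesis
    using invariants_of_order_at_1_eq[OF assms(1) _ order nat_q_seq_less[OF p]] assms(4)
      q_seq_bounds[OF p] by simp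
qed

end
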